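(* For every infinite cardinal $\kappa$, there is a subalgebra of the free Boolean algebra $\mathrm{Fr}(\kappa^+)$ which does not have the $\kappa$-FN.
   Context: $\mathrm{Fr}(\kappa^+)$ denotes the free Boolean algebra on $\kappa^+$ generators. For an infinite cardinal $\kappa$, a Boolean algebra $B$ has the $\kappa$-Freese–Nation property ($\kappa$-FN) if there is a map $f:B\to[B]^{<\kappa}$ such that for all $a,b\in B$ with $a\le b$ there is $c\in f(a)\cap f(b)$ with $a\le c\le b$. *)

theory Defs
  imports Main
begin

text \<open>The free Boolean algebra on a generator set X, realised concretely (Stone
  representation) as the algebra of subsets of the Cantor cube (all maps 'x \<Rightarrow> bool)
  generated by the generator sets {f. f x}, x \<in> X. Order is set inclusion.\<close>

inductive_set free_ba :: "'x set \<Rightarrow> ('x \<Rightarrow> bool) set set" for X :: "'x set" where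
  gen: "x \<in> X \<Longrightarrow> {f. f x} \<in> free_ba X"
| top: "UNIV \<in> free_ba X"
| compl: "A \<in> free_ba X \<Longrightarrow> - A \<in> free_ba X"
| inter: "A \<in> free_ba X \<Longrightarrow> B \<in> free_ba X \<Longrightarrow> A \<inter> B \<in> free_ba X"

definition bsubalgebra :: "'a set set \<Rightarrow> 'a set set \<Rightarrow> bool" where
  "bsubalgebra S B \<longleftrightarrow> S \<subseteq> B \<and> UNIV \<in> S \<and> (\<forall>a\<in>S. - a \<in> S)
     \<and> (\<forall>a\<in>S. \<forall>b\<in>S. a \<inter> b \<in> S)"

text \<open>kappa-Freese-Nation property, kappa given as the cardinality of the set K.\<close>
definition kappa_FN :: "'k set \<Rightarrow> 'a set set \<Rightarrow> bool" where
  "kappa_FN K B \<longleftrightarrow> (\<exists>f :: 'a set \<Rightarrow> 'a set set.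
      (\<forall>a\<in>B. f a \<subseteq> B \<and> (card_of (f a), card_of K) \<in> ordLess) \<and>
      (\<forall>a\<in>B. \<forall>b\<in>B. a \<subseteq> b \<longrightarrow> (\<exists>c\<in>f a \<inter> f b. a \<subseteq> c \<and> c \<subseteq> b)))"

end

theory Submission
  imports Defs
begin

text \<open>Pick \<open>Z \<subseteq> X\<close> of size \<open>\<kappa>\<close>, a point \<open>w \<in> X - Z\<close>, and let \<open>Y = X - Z - {w}\<close>, which has
  size \<open>\<kappa>\<^sup>+\<close>. The subalgebra \<open>S\<close> generated by the elements \<open>a\<^sub>z = z \<and> w\<close> (\<open>z \<in> Z\<close>) and
  \<open>b\<^sub>y = w \<or> y\<close> (\<open>y \<in> Y\<close>) satisfies \<open>a\<^sub>z \<le> b\<^sub>y\<close> for all \<open>z, y\<close>, but every \<open>c \<in> S\<close> lies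
  above only finitely many \<open>a\<^sub>z\<close> or below only finitely many \<open>b\<^sub>y\<close>, because \<open>c\<close> depends on
  finitely many coordinates. Given a \<open>\<kappa>\<close>-FN map \<open>f\<close>, the elements of the sets \<open>f(a\<^sub>z)\<close>
  lying below only finitely many \<open>b\<^sub>y\<close> can account for at most \<open>\<kappa>\<close> indices \<open>y\<close>, so some
  \<open>y\<close> escapes them. Then every interpolant \<open>c \<in> f(a\<^sub>z) \<inter> f(b\<^sub>y)\<close> between \<open>a\<^sub>z\<close> and \<open>b\<^sub>y\<close>
  lies above only finitely many \<open>a\<^sub>z\<close>, and fewer than \<open>\<kappa>\<close> such finite sets, all coming
  from \<open>f(b\<^sub>y)\<close>, would have to cover \<open>Z\<close>.\<close>

unbundle cardinal_syntax

lemma card_of_finite_ordLess_infinite: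
  assumes "finite A" "infinite B"
  shows "|A| <o |B|"
  using finite_ordLess_infinite[of "|A|" "|B|"] assms
  by (simp add: Field_card_of card_of_Well_order card_of_well_order_on)

lemma card_of_UNION_finite_ordLeq_infinite:
  assumes "infinite K" "|I| \<le>o |K|" "\<forall>i\<in>I. finite (A i)"
  shows "|\<Union>i\<in>I. A i| \<le>o |K|"
  using assms card_of_finite_ordLess_infinite ordLess_imp_ordLeq
  by (intro card_of_UNION_ordLeq_infinite) blast+

lemma card_of_UNION_finite_ordLess_infinite:
  assumes "infinite K" "|I| <o |K|" "\<forall>i\<in>I. finite (A i)"
  shows "|\<Union>i\<in>I. A i| <o |K|"
proof (cases "finite I")
  case True
  then show ?thesis using assms by (intro card_of_finite_ordLess_infinite) auto
next
  case False
  have "|\<Union>i\<in>I. A i| \<le>o |I|"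
    using card_of_UNION_finite_ordLeq_infinite[OF False _ assms(3)] ordLeq_refl card_of_Card_order
    by blast
  then show ?thesis using assms(2) ordLeq_ordLess_trans by blast
qed

lemma card_of_Diff_not_ordLeq_infinite:
  assumes "infinite K" "\<not> |A| \<le>o |K|" "|B| \<le>o |K|"
  shows "\<not> |A - B| \<le>o |K|"
proof
  assume "|A - B| \<le>o |K|"
  then have "|(A - B) \<union> B| \<le>o |K|"
    by (rule card_of_Un_ordLeq_infinite_Field[of "|K|", unfolded Field_card_of,
          OF assms(1) _ assms(3) card_of_card_order_on])
  then show False
    using assms(2) card_of_mono1[of A "(A - B) \<union> B"] ordLeq_transitive by blast
qed

lemma split_off_subset_of_smaller_card:
  assumes "infinite K" "|K| <o |X|"
  obtains Z w where "Z \<subseteq> X" "|Z| =o |K|" "w \<in> X" "w \<notin> Z" "\<not> |X - Z - {w}| \<le>o |K|"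
proof -
  have "|K| \<le>o |X|"
    using assms(2) by (rule ordLess_imp_ordLeq)
  then obtain Z where Z: "Z \<subseteq> X" "|K| =o |Z|"
    using internalize_card_of_ordLeq2[of K X] by auto
  have X_large: "\<not> |X| \<le>o |K|"
    using assms(2) not_ordLess_ordLeq by blast
  have "|Z| \<le>o |K|"
    using Z(2) ordIso_iff_ordLeq by blast
  then have XZ_large: "\<not> |X - Z| \<le>o |K|"
    by (rule card_of_Diff_not_ordLeq_infinite[OF assms(1) X_large])
  then have "infinite (X - Z)"
    using card_of_finite_ordLess_infinite[OF _ assms(1)] ordLess_imp_ordLeq by blast
  then obtain w where w: "w \<in> X - Z"
    using infinite_imp_nonempty by blast
  have "|{w}| \<le>o |K|"
    using card_of_finite_ordLess_infinite[OF _ assms(1)] ordLess_imp_ordLeq by blast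
  then have "\<not> |X - Z - {w}| \<le>o |K|"
    by (rule card_of_Diff_not_ordLeq_infinite[OF assms(1) XZ_large])
  then show thesis
    using that[OF Z(1) ordIso_symmetric[OF Z(2)]] w by blast
qed

inductive_set ba_generated :: "'a set set \<Rightarrow> 'a set set" for G :: "'a set set" where
  basic: "A \<in> G \<Longrightarrow> A \<in> ba_generated G"
| top: "UNIV \<in> ba_generated G"
| compl: "A \<in> ba_generated G \<Longrightarrow> - A \<in> ba_generated G"
| inter: "A \<in> ba_generated G \<Longrightarrow> B \<in> ba_generated G \<Longrightarrow> A \<inter> B \<in> ba_generated G"

lemma ba_generated_minimal:
  assumes "G \<subseteq> T" "UNIV \<in> T" "\<And>A. A \<in> T \<Longrightarrow> - A \<in> T"
    and "\<And>A B. A \<in> T \<Longrightarrow> B \<in> T \<Longrightarrow> A \<inter> B \<in> T"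
  shows "ba_generated G \<subseteq> T"
proof
  fix A
  assume "A \<in> ba_generated G"
  then show "A \<in> T"
    by induction (use assms in auto)
qed

lemma bsubalgebra_ba_generated:
  assumes "G \<subseteq> free_ba X"
  shows "bsubalgebra (ba_generated G) (free_ba X)"
  using ba_generated_minimal[OF assms] unfolding bsubalgebra_def
  by (auto intro: free_ba.intros ba_generated.intros)

lemma ba_generated_mem_iff:
  assumes "\<forall>A\<in>G. p \<in> A \<longleftrightarrow> q \<in> A" "A \<in> ba_generated G"
  shows "p \<in> A \<longleftrightarrow> q \<in> A"
  using ba_generated_minimal[of G "{A. p \<in> A \<longleftrightarrow> q \<in> A}"] assms by auto

lemma free_ba_conj:
  assumes "x \<in> X" "y \<in> X"
  shows "{f. f x \<and> f y} \<in> free_ba X"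
proof -
  have "{f. f x} \<inter> {f. f y} \<in> free_ba X"
    using assms by (intro free_ba.inter free_ba.gen)
  then show ?thesis by (simp add: Collect_conj_eq)
qed

lemma free_ba_disj:
  assumes "x \<in> X" "y \<in> X"
  shows "{f. f x \<or> f y} \<in> free_ba X"
proof -
  have "- (- {f. f x} \<inter> - {f. f y}) \<in> free_ba X"
    using assms by (intro free_ba.compl free_ba.inter free_ba.gen)
  then show ?thesis by (simp add: Collect_disj_eq)
qed

definition supported_on :: "'x set \<Rightarrow> ('x \<Rightarrow> bool) set \<Rightarrow> bool" where
  "supported_on F A \<longleftrightarrow> (\<forall>f g. (\<forall>x\<in>F. f x = g x) \<longrightarrow> (f \<in> A \<longleftrightarrow> g \<in> A))"

lemma supported_onI:
  "(\<And>f g. (\<And>x. x \<in> F \<Longrightarrow> f x = g x) \<Longrightarrow> f \<in> A \<Longrightarrow> g \<in> A) \<Longrightarrow> supported_on F A"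
  unfolding supported_on_def by (metis (full_types))

lemma supported_onD:
  "supported_on F A \<Longrightarrow> (\<And>x. x \<in> F \<Longrightarrow> f x = g x) \<Longrightarrow> f \<in> A \<longleftrightarrow> g \<in> A"
  unfolding supported_on_def by blast

lemma supported_on_mono: "supported_on F A \<Longrightarrow> F \<subseteq> F' \<Longrightarrow> supported_on F' A"
  by (rule supported_onI) (use supported_onD in blast)

lemma supported_on_Compl: "supported_on F A \<Longrightarrow> supported_on F (- A)"
  by (rule supported_onI) (use supported_onD in blast)

lemma supported_on_Int: "supported_on F A \<Longrightarrow> supported_on F B \<Longrightarrow> supported_on F (A \<inter> B)"
  by (rule supported_onI) (use supported_onD in blast)

definition finitely_supported :: "('x \<Rightarrow> bool) set \<Rightarrow> bool" where
  "finitely_supported A \<longleftrightarrow> (\<exists>F. finite F \<and> supported_on F A)"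

lemma finitely_supported_binary: "finitely_supported {f. P (f x) (f y)}"
  unfolding finitely_supported_def supported_on_def by (intro exI[of _ "{x, y}"]) simp

lemma finitely_supported_Int:
  assumes "finitely_supported A" "finitely_supported B"
  shows "finitely_supported (A \<inter> B)"
proof -
  obtain F1 where "finite F1" "supported_on F1 A"
    using assms(1) unfolding finitely_supported_def by metis
  obtain F2 where "finite F2" "supported_on F2 B"
    using assms(2) unfolding finitely_supported_def by metis
  have "supported_on (F1 \<union> F2) A"
    using \<open>supported_on F1 A\<close> by (rule supported_on_mono) simp
  moreover have "supported_on (F1 \<union> F2) B"
    using \<open>supported_on F2 B\<close> by (rule supported_on_mono) simp
  ultimately have "supported_on (F1 \<union> F2) (A \<inter> B)"
    by (rule supported_on_Int)
  with \<open>finite F1\<close> \<open>finite F2\<close> show ?thesis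
    unfolding finitely_supported_def by (metis finite_UnI)
qed

lemma finitely_supported_ba_generated:
  fixes G :: "('x \<Rightarrow> bool) set set"
  assumes "\<forall>A\<in>G. finitely_supported A" "A \<in> ba_generated G"
  shows "finitely_supported A"
proof -
  have "ba_generated G \<subseteq> {A. finitely_supported A}"
  proof (rule ba_generated_minimal)
    show "G \<subseteq> {A. finitely_supported A}"
      using assms(1) by blast
    show "UNIV \<in> {A. finitely_supported A}"
      unfolding finitely_supported_def supported_on_def by (intro CollectI exI[of _ "{}"]) simp
    show "- A \<in> {A. finitely_supported A}" if "A \<in> {A. finitely_supported A}" for A :: "('x \<Rightarrow> bool) set"
      using that supported_on_Compl unfolding finitely_supported_def by auto
    show "A \<inter> B \<in> {A. finitely_supported A}"
      if "A \<in> {A. finitely_supported A}" "B \<in> {A. finitely_supported A}"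
      for A B :: "('x \<Rightarrow> bool) set"
      using that finitely_supported_Int by simp
  qed
  then show ?thesis
    using assms(2) by blast
qed

lemma finitely_supported_free_coordinate:
  assumes "finitely_supported A" "infinite I"
  obtains i where "i \<in> I" "\<And>f t. f(i := t) \<in> A \<longleftrightarrow> f \<in> A"
proof -
  obtain F where "finite F" "supported_on F A"
    using assms(1) unfolding finitely_supported_def by metis
  obtain i where "i \<in> I - F"
    using infinite_imp_nonempty[OF Diff_infinite_finite[OF \<open>finite F\<close> assms(2)]] by blast
  moreover have "f(i := t) \<in> A \<longleftrightarrow> f \<in> A" for f t
    using \<open>supported_on F A\<close> by (rule supported_onD) (use \<open>i \<in> I - F\<close> in auto)
  ultimately show thesis
    by (intro that[of i]) simp_all
qed

definition interpolation_algebra :: "'x \<Rightarrow> 'x set \<Rightarrow> 'x set \<Rightarrow> ('x \<Rightarrow> bool) set set" where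
  "interpolation_algebra w Z Y =
     ba_generated ((\<lambda>z. {f. f z \<and> f w}) ` Z \<union> (\<lambda>y. {f. f w \<or> f y}) ` Y)"

lemma bsubalgebra_interpolation_algebra:
  assumes "w \<in> X" "Z \<subseteq> X" "Y \<subseteq> X"
  shows "bsubalgebra (interpolation_algebra w Z Y) (free_ba X)"
proof -
  have "(\<lambda>z. {f. f z \<and> f w}) ` Z \<subseteq> free_ba X"
    using assms(1,2) by (auto intro!: free_ba_conj)
  moreover have "(\<lambda>y. {f. f w \<or> f y}) ` Y \<subseteq> free_ba X"
    using assms(1,3) by (auto intro!: free_ba_disj)
  ultimately show ?thesis
    unfolding interpolation_algebra_def by (intro bsubalgebra_ba_generated Un_least)
qed

lemma finite_below_or_finite_above:
  assumes "w \<notin> Z" "w \<notin> Y" "Y \<inter> Z = {}" "c \<in> interpolation_algebra w Z Y"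
  shows "finite {z\<in>Z. {f. f z \<and> f w} \<subseteq> c} \<or> finite {y\<in>Y. c \<subseteq> {f. f w \<or> f y}}"
proof (rule ccontr)
  assume "\<not> ?thesis"
  then have below: "infinite {z\<in>Z. {f. f z \<and> f w} \<subseteq> c}"
    and above: "infinite {y\<in>Y. c \<subseteq> {f. f w \<or> f y}}"
    by simp_all
  have "finitely_supported c"
    using assms(4)[unfolded interpolation_algebra_def]
      finitely_supported_binary[of "(\<and>)"] finitely_supported_binary[of "(\<or>)"]
    by (intro finitely_supported_ba_generated) auto
  then obtain z where z: "z \<in> {z\<in>Z. {f. f z \<and> f w} \<subseteq> c}"
    and z_free: "\<And>f t. f(z := t) \<in> c \<longleftrightarrow> f \<in> c"
    using below by (rule finitely_supported_free_coordinate) (rule that)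
  obtain y where y: "y \<in> {y\<in>Y. c \<subseteq> {f. f w \<or> f y}}"
    and y_free: "\<And>f t. f(y := t) \<in> c \<longleftrightarrow> f \<in> c"
    using \<open>finitely_supported c\<close> above by (rule finitely_supported_free_coordinate) (rule that)
  \<comment> \<open>No generator separates \<open>p\<close> from \<open>p(w := False)\<close>, but coordinates \<open>z\<close>, \<open>y\<close> outside
    the support of \<open>c\<close> force \<open>p \<in> c\<close> and \<open>p(w := False) \<notin> c\<close>.\<close>
  define p where "p = (\<lambda>x. x \<notin> Z)"
  have "p(z := True) \<in> c"
    using z assms(1) by (auto simp: p_def)
  then have "p \<in> c"
    using z_free[of p True] by simp
  have "p(w := False, y := False) \<notin> {f. f w \<or> f y}"
    using y assms(2) by auto
  then have "p(w := False, y := False) \<notin> c"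
    using y by blast
  then have "p(w := False) \<notin> c"
    using y_free[of "p(w := False)" False] by simp
  moreover have "p \<in> c \<longleftrightarrow> p(w := False) \<in> c"
    using assms(4)[unfolded interpolation_algebra_def]
    by (rule ba_generated_mem_iff[rotated])
      (use assms(1-3) in \<open>auto simp: p_def disjoint_iff split: if_splits\<close>)
  ultimately show False
    using \<open>p \<in> c\<close> by simp
qed

lemma not_kappa_FN_if_finite_below_or_finite_above:
  assumes "infinite K" "|Z| =o |K|" "\<not> |Y| \<le>o |K|"
    and "a ` Z \<subseteq> S" "b ` Y \<subseteq> S" "\<And>z y. z \<in> Z \<Longrightarrow> y \<in> Y \<Longrightarrow> a z \<subseteq> b y"
    and "\<And>c. c \<in> S \<Longrightarrow> finite {z\<in>Z. a z \<subseteq> c} \<or> finite {y\<in>Y. c \<subseteq> b y}"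
  shows "\<not> kappa_FN K S"
proof
  assume "kappa_FN K S"
  then obtain f where f_small: "\<forall>c\<in>S. f c \<subseteq> S \<and> |f c| <o |K|"
    and f_interpolates: "\<forall>c\<in>S. \<forall>d\<in>S. c \<subseteq> d \<longrightarrow> (\<exists>e\<in>f c \<inter> f d. c \<subseteq> e \<and> e \<subseteq> d)"
    unfolding kappa_FN_def by (elim exE conjE)
  define L where "L c = {z\<in>Z. a z \<subseteq> c}" for c
  define R where "R c = {y\<in>Y. c \<subseteq> b y}" for c
  define C where "C = {c \<in> (\<Union>z\<in>Z. f (a z)). finite (R c)}"
  have "|C| \<le>o |\<Union>z\<in>Z. f (a z)|"
    unfolding C_def by (rule card_of_mono1) blast
  also have "|\<Union>z\<in>Z. f (a z)| \<le>o |K|"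
  proof (rule card_of_UNION_ordLeq_infinite[OF assms(1)])
    show "|Z| \<le>o |K|"
      using assms(2) ordIso_iff_ordLeq by blast
    show "\<forall>z\<in>Z. |f (a z)| \<le>o |K|"
      using f_small assms(4) ordLess_imp_ordLeq by blast
  qed
  finally have "|\<Union>c\<in>C. R c| \<le>o |K|"
    by (rule card_of_UNION_finite_ordLeq_infinite[OF assms(1)]) (simp add: C_def)
  then have "\<not> Y \<subseteq> (\<Union>c\<in>C. R c)"
    using assms(3) card_of_mono1[of Y] ordLeq_transitive by blast
  then obtain y where "y \<in> Y" and y_escapes: "y \<notin> (\<Union>c\<in>C. R c)"
    by blast
  let ?D = "{c\<in>f (b y). finite (L c)}"
  have "Z \<subseteq> (\<Union>c\<in>?D. L c)"
  proof
    fix z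
    assume "z \<in> Z"
    have "a z \<in> S" "b y \<in> S"
      using assms(4,5) \<open>z \<in> Z\<close> \<open>y \<in> Y\<close> by blast+
    then obtain c where c: "c \<in> f (a z)" "c \<in> f (b y)" "a z \<subseteq> c" "c \<subseteq> b y"
      using f_interpolates assms(6)[OF \<open>z \<in> Z\<close> \<open>y \<in> Y\<close>] by blast
    then have "c \<in> S" "y \<in> R c"
      using f_small assms(4) \<open>z \<in> Z\<close> \<open>y \<in> Y\<close> unfolding R_def by blast+
    then have "finite (L c)"
      using y_escapes c(1) \<open>z \<in> Z\<close> assms(7) unfolding C_def L_def R_def by blast
    then show "z \<in> (\<Union>c\<in>?D. L c)"
      using c \<open>z \<in> Z\<close> unfolding L_def by blast
  qed
  moreover have "|\<Union>c\<in>?D. L c| <o |K|"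
  proof (rule card_of_UNION_finite_ordLess_infinite[OF assms(1)])
    have "|?D| \<le>o |f (b y)|"
      by (rule card_of_mono1) blast
    moreover have "|f (b y)| <o |K|"
      using f_small assms(5) \<open>y \<in> Y\<close> by blast
    ultimately show "|?D| <o |K|"
      by (rule ordLeq_ordLess_trans)
  qed simp
  ultimately have "|Z| <o |K|"
    using card_of_mono1[of Z] ordLeq_ordLess_trans by blast
  then show False
    using assms(2) not_ordLess_ordIso by blast
qed

lemma not_kappa_FN_interpolation_algebra:
  assumes "infinite K" "|Z| =o |K|" "\<not> |Y| \<le>o |K|" "w \<notin> Z" "w \<notin> Y" "Y \<inter> Z = {}"
  shows "\<not> kappa_FN K (interpolation_algebra w Z Y)"
proof (rule not_kappa_FN_if_finite_below_or_finite_above[OF assms(1-3)])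
  show "(\<lambda>z. {f. f z \<and> f w}) ` Z \<subseteq> interpolation_algebra w Z Y"
    "(\<lambda>y. {f. f w \<or> f y}) ` Y \<subseteq> interpolation_algebra w Z Y"
    unfolding interpolation_algebra_def by (auto intro: ba_generated.basic)
  show "{f. f z \<and> f w} \<subseteq> {f. f w \<or> f y}" for z y
    by blast
  show "finite {z\<in>Z. {f. f z \<and> f w} \<subseteq> c} \<or> finite {y\<in>Y. c \<subseteq> {f. f w \<or> f y}}"
    if "c \<in> interpolation_algebra w Z Y" for c
    using that by (rule finite_below_or_finite_above[OF assms(4-6)])
qed

theorem proposition7p6:
  fixes K :: "'k set" and X :: "'x set"
  assumes "infinite K"
    and "(card_of X, cardSuc (card_of K)) \<in> ordIso"
  shows "\<exists>S. bsubalgebra S (free_ba X) \<and> \<not> kappa_FN K S"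
proof -
  have "|K| <o |X|"
    using cardSuc_greater[OF card_of_Card_order] ordIso_symmetric[OF assms(2)]
    by (rule ordLess_ordIso_trans)
  then obtain Z w where Z: "Z \<subseteq> X" "|Z| =o |K|" and w: "w \<in> X" "w \<notin> Z"
    and Y_large: "\<not> |X - Z - {w}| \<le>o |K|"
    by (rule split_off_subset_of_smaller_card[OF assms(1)]) (rule that)
  let ?S = "interpolation_algebra w Z (X - Z - {w})"
  have "bsubalgebra ?S (free_ba X)"
    using Z(1) w(1) by (intro bsubalgebra_interpolation_algebra) auto
  moreover have "\<not> kappa_FN K ?S"
    using Z(2) Y_large w(2) by (intro not_kappa_FN_interpolation_algebra[OF assms(1)]) auto
  ultimately show ?thesis
    by blast
qed

end
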